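(* Let $H$ be a Kekul\'ean hexagonal system and $n\ge0$. The map $f$ from the set of Clar covers of $H$ with exactly $n$ hexagons to the set of induced subgraphs of $R(H)$ isomorphic to $Q_n$ is surjective: for every induced subgraph $G_n$ of $R(H)$ isomorphic to $Q_n$ there is a Clar cover $C$ of $H$ with exactly $n$ hexagons such that $f(C)=G_n$.
   Context: A hexagonal system is a 2-connected finite plane graph in which every interior face is a regular hexagon of side length one; its hexagons are the boundaries of its interior faces; it is Kekul\'ean if it has a perfect matching. A Clar cover of $H$ is a spanning subgraph each of whose components is a hexagon of $H$ or a single edge. The resonance graph $R(H)$ has the perfect matchings of $H$ as vertices, two adjacent iff their symmetric difference is the edge set of a hexagon of $H$. For a Clar cover $C$, $f(C)$ denotes the subgraph of $R(H)$ induced by all perfect matchings $M$ of $H$ such that every hexagon component of $C$ is $M$-alternating and every single-edge component of $C$ belongs to $M$. *)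

theory Defs
  imports Main
begin

text \<open>
  Cells (unit hexagons of the regular hexagonal tiling of the plane)
  are indexed by their centres, written in axial coordinates of the triangular lattice.
  Two cells are neighbours (share an edge) iff their coordinates differ by one of six
  vectors.  A vertex of the honeycomb is represented by the set of the three cells
  meeting at it (a triangle of pairwise neighbouring cells), and an edge of the honeycomb
  by the two-element set of its end vertices.
\<close>

type_synonym cell = "int \<times> int"
type_synonym hvertex = "cell set"
type_synonym hedge = "hvertex set"

definition nbr :: "cell \<Rightarrow> cell \<Rightarrow> bool" where
  "nbr c d \<longleftrightarrow> (fst d - fst c, snd d - snd c) \<in>
     {(1,0), (-1,0), (0,1), (0,-1), (1,-1), (-1,1)}"

definition lattice_vertex :: "hvertex \<Rightarrow> bool" where
  "lattice_vertex T \<longleftrightarrow> card T = 3 \<and> (\<forall>c\<in>T. \<forall>d\<in>T. c \<noteq> d \<longrightarrow> nbr c d)"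

definition hex_vertices :: "cell \<Rightarrow> hvertex set" where
  "hex_vertices c = {T. lattice_vertex T \<and> c \<in> T}"

definition hex_edges :: "cell \<Rightarrow> hedge set" where
  "hex_edges c = {{u, v} | u v. u \<in> hex_vertices c \<and> v \<in> hex_vertices c \<and> card (u \<inter> v) = 2}"

text \<open>
  A hexagonal system is given by the finite nonempty set S of its hexagons (interior faces),
  placed in the hexagonal lattice.  The graph is the union of the boundaries of these
  hexagons.  2-connectedness of the graph corresponds to S being edge-connected, and the
  requirement that every interior face is a unit hexagon of the system corresponds to the
  complement of S (in the lattice) being edge-connected (no holes).
\<close>

definition cells_connected :: "cell set \<Rightarrow> bool" where
  "cells_connected A \<longleftrightarrow>
     (\<forall>c\<in>A. \<forall>d\<in>A. (\<lambda>x y. x \<in> A \<and> y \<in> A \<and> nbr x y)\<^sup>*\<^sup>* c d)"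

definition hexagonal_system :: "cell set \<Rightarrow> bool" where
  "hexagonal_system S \<longleftrightarrow> finite S \<and> S \<noteq> {} \<and> cells_connected S \<and> cells_connected (- S)"

definition HV :: "cell set \<Rightarrow> hvertex set" where
  "HV S = (\<Union>c\<in>S. hex_vertices c)"

definition HE :: "cell set \<Rightarrow> hedge set" where
  "HE S = (\<Union>c\<in>S. hex_edges c)"

definition perfect_matching :: "cell set \<Rightarrow> hedge set \<Rightarrow> bool" where
  "perfect_matching S M \<longleftrightarrow> M \<subseteq> HE S \<and> (\<forall>v\<in>HV S. \<exists>!e. e \<in> M \<and> v \<in> e)"

definition kekulean :: "cell set \<Rightarrow> bool" where
  "kekulean S \<longleftrightarrow> (\<exists>M. perfect_matching S M)"

text \<open>Hexagon c is M-alternating: its edges alternate between M and not M, i.e.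
  the edges of c in M form a perfect matching of the 6-cycle c.\<close>
definition alternating :: "hedge set \<Rightarrow> cell \<Rightarrow> bool" where
  "alternating M c \<longleftrightarrow> (\<forall>v\<in>hex_vertices c. \<exists>!e. e \<in> M \<inter> hex_edges c \<and> v \<in> e)"

definition res_adj :: "cell set \<Rightarrow> hedge set \<Rightarrow> hedge set \<Rightarrow> bool" where
  "res_adj S M M' \<longleftrightarrow> perfect_matching S M \<and> perfect_matching S M' \<and>
     (\<exists>c\<in>S. (M - M') \<union> (M' - M) = hex_edges c)"

definition cube_adj :: "nat set \<Rightarrow> nat set \<Rightarrow> bool" where
  "cube_adj A B \<longleftrightarrow> card ((A - B) \<union> (B - A)) = 1"

definition induced_iso_cube :: "cell set \<Rightarrow> hedge set set \<Rightarrow> nat \<Rightarrow> bool" where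
  "induced_iso_cube S W n \<longleftrightarrow>
     (\<exists>\<phi>. bij_betw \<phi> (Pow {..<n}) W \<and>
        (\<forall>A\<in>Pow {..<n}. \<forall>B\<in>Pow {..<n}. cube_adj A B \<longleftrightarrow> res_adj S (\<phi> A) (\<phi> B)))"

text \<open>
  A Clar cover is a spanning subgraph whose components are hexagons of H or single edges.
  It is represented by the set K of its hexagon components and the set F of its
  single-edge components; the component condition says these are pairwise vertex-disjoint,
  and spanning means they cover all vertices.
\<close>
definition clar_cover :: "cell set \<Rightarrow> cell set \<Rightarrow> hedge set \<Rightarrow> bool" where
  "clar_cover S K F \<longleftrightarrow> K \<subseteq> S \<and> F \<subseteq> HE S \<and>
     (\<forall>c\<in>K. \<forall>d\<in>K. c \<noteq> d \<longrightarrow> hex_vertices c \<inter> hex_vertices d = {}) \<and>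
     (\<forall>e\<in>F. \<forall>e'\<in>F. e \<noteq> e' \<longrightarrow> e \<inter> e' = {}) \<and>
     (\<forall>e\<in>F. \<forall>c\<in>K. e \<inter> hex_vertices c = {}) \<and>
     HV S = (\<Union>c\<in>K. hex_vertices c) \<union> \<Union>F"

text \<open>Vertex set of f(C) (f(C) is the induced subgraph of R(H) on this set).\<close>
definition clar_set :: "cell set \<Rightarrow> cell set \<Rightarrow> hedge set \<Rightarrow> hedge set set" where
  "clar_set S K F = {M. perfect_matching S M \<and> (\<forall>c\<in>K. alternating M c) \<and> F \<subseteq> M}"

end

theory Submission
  imports Defs
begin

text \<open>
  Let \<phi> be an isomorphism from Q_n onto the given subgraph of R(H).  Every edge of the cube
  flips the matching on one hexagon.  Opposite edges of a square of the cube flip the same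
  hexagon, since the symmetric difference of the edge sets of two distinct hexagons determines
  the pair; hence flipping coordinate i always flips one hexagon h_i, and
  \<phi>(A) = \<phi>({}) \<Delta> \<Union>_{i\<in>A} E(h_i).  The hexagons h_i are pairwise vertex-disjoint and
  alternating in every \<phi>(A).  So K = {h_i} together with the edges of \<phi>({}) outside K is a
  Clar cover with n hexagons, and a perfect matching compatible with it is determined by
  choosing one of the two perfect matchings of each h_i, which gives exactly the image of \<phi>.
\<close>

section \<open>Geometry of a hexagon\<close>

definition nb_offsets :: "(int \<times> int) list" where
  "nb_offsets = [(1,0), (0,1), (-1,1), (-1,0), (0,-1), (1,-1)]"

text \<open>The neighbours of a cell in counterclockwise order, indexed modulo 6.\<close>
definition nb :: "nat \<Rightarrow> cell \<Rightarrow> cell" where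
  "nb k c = (fst c + fst (nb_offsets ! (k mod 6)), snd c + snd (nb_offsets ! (k mod 6)))"

definition corner :: "nat \<Rightarrow> cell \<Rightarrow> hvertex" where
  "corner k c = {c, nb k c, nb (Suc k) c}"

definition side :: "nat \<Rightarrow> cell \<Rightarrow> hedge" where
  "side k c = {corner k c, corner (Suc k) c}"

lemma ex_less_6: "(\<exists>k<6. P (k::nat)) \<longleftrightarrow> P 0 \<or> P 1 \<or> P 2 \<or> P 3 \<or> P 4 \<or> P 5"
  by (auto simp: less_Suc_eq numeral_eq_Suc)

lemma all_less_6: "(\<forall>k<6. P (k::nat)) \<longleftrightarrow> P 0 \<and> P 1 \<and> P 2 \<and> P 3 \<and> P 4 \<and> P 5"
  using ex_less_6[of "Not \<circ> P"] by auto

lemma nb_simps: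
  "nb 0 (a,b) = (a+1,b)" "nb 1 (a,b) = (a,b+1)" "nb 2 (a,b) = (a-1,b+1)"
  "nb 3 (a,b) = (a-1,b)" "nb 4 (a,b) = (a,b-1)" "nb 5 (a,b) = (a+1,b-1)"
  by (simp_all add: nb_def nb_offsets_def)

lemma nb_mod6 [simp]: "nb (k mod 6) c = nb k c"
  by (simp add: nb_def)

lemma nb_Suc_mod6 [simp]: "nb (Suc (k mod 6)) c = nb (Suc k) c"
  by (metis mod_Suc_eq nb_mod6)

lemma corner_mod6 [simp]: "corner (k mod 6) c = corner k c"
  by (simp add: corner_def)

lemma corner_Suc_mod6 [simp]: "corner (Suc (k mod 6)) c = corner (Suc k) c"
  by (metis corner_mod6 mod_Suc_eq)

lemma side_mod6 [simp]: "side (k mod 6) c = side k c"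
  by (simp add: side_def)

lemma nbr_iff_nb: "nbr c d \<longleftrightarrow> (\<exists>k<6. d = nb k c)"
proof -
  obtain a b where c: "c = (a,b)" by fastforce
  obtain x y where d: "d = (x,y)" by fastforce
  have e: "(x - a, y - b) = (p,q) \<longleftrightarrow> (x,y) = (a+p,b+q)" for p q :: int by auto
  show ?thesis
    unfolding c d nbr_def ex_less_6 nb_simps insert_iff e empty_iff fst_conv snd_conv by (simp, blast)
qed

lemma nbr_sym: "nbr c d \<Longrightarrow> nbr d c"
  unfolding nbr_def by (elim insertE emptyE) (simp_all add: prod_eq_iff)

text \<open>Facts about the neighbours of one cell are finite computations, carried out for
  indices below 6 and a symbolic cell (a,b).\<close>
lemma nb_eq_iff: "nb i c = nb j c \<longleftrightarrow> i mod 6 = j mod 6"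
proof -
  have "\<forall>i<6. \<forall>j<6. nb i (a,b) = nb j (a,b) \<longrightarrow> i = j" for a b
    unfolding all_less_6 nb_simps by simp
  then show ?thesis
    by (metis mod_less_divisor nb_mod6 prod.collapse zero_less_numeral)
qed

lemma nb_neq_self: "nb k c \<noteq> c"
proof -
  have "\<forall>k<6. nb k (a,b) \<noteq> (a,b)" for a b
    unfolding all_less_6 nb_simps by simp
  then show ?thesis
    by (metis mod_less_divisor nb_mod6 prod.collapse zero_less_numeral)
qed

lemma nbr_nb_nb_iff:
  "i < 6 \<Longrightarrow> j < 6 \<Longrightarrow> nbr (nb i c) (nb j c) \<longleftrightarrow> j = Suc i mod 6 \<or> i = Suc j mod 6"
proof -
  have "\<forall>i<6. \<forall>j<6. nbr (nb i (a,b)) (nb j (a,b)) \<longleftrightarrow> j = Suc i mod 6 \<or> i = Suc j mod 6" for a b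
    unfolding all_less_6 nb_simps nbr_def by simp
  then show "i < 6 \<Longrightarrow> j < 6 \<Longrightarrow> ?thesis"
    by (metis prod.collapse)
qed

lemma nb_neq_nb_Suc: "nb k c \<noteq> nb (Suc k) c"
  by (simp add: nb_eq_iff mod_Suc)

lemma card_corner: "card (corner k c) = 3"
  unfolding corner_def using nb_neq_self[of k c] nb_neq_self[of "Suc k" c] nb_neq_nb_Suc[of k c]
  by (simp add: eq_commute)

lemma lattice_vertex_corner: "lattice_vertex (corner k c)"
proof -
  have 1: "nbr c (nb k c)" and 2: "nbr c (nb (Suc k) c)"
    using nbr_iff_nb by (metis mod_less_divisor nb_mod6 zero_less_numeral)+
  have 3: "nbr (nb k c) (nb (Suc k) c)"
    using nbr_nb_nb_iff[of "k mod 6" "Suc k mod 6" c] by (simp add: mod_Suc_eq)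
  have "\<forall>x\<in>{c, nb k c, nb (Suc k) c}. \<forall>y\<in>{c, nb k c, nb (Suc k) c}. x \<noteq> y \<longrightarrow> nbr x y"
    using 1 2 3 nbr_sym[OF 1] nbr_sym[OF 2] nbr_sym[OF 3] by simp
  then show ?thesis
    using card_corner[of k c] unfolding lattice_vertex_def corner_def by blast
qed

lemma corner_in_hex_vertices: "corner k c \<in> hex_vertices c"
  using lattice_vertex_corner[of k c] by (simp add: hex_vertices_def corner_def)

lemma hex_vertices_eq_corners: "hex_vertices c = (\<lambda>k. corner k c) ` {..<6}"
proof
  show "(\<lambda>k. corner k c) ` {..<6} \<subseteq> hex_vertices c"
    using corner_in_hex_vertices by blast
next
  show "hex_vertices c \<subseteq> (\<lambda>k. corner k c) ` {..<6}"
  proof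
    fix T assume "T \<in> hex_vertices c"
    then have L: "lattice_vertex T" and cT: "c \<in> T" unfolding hex_vertices_def by auto
    then have "card (T - {c}) = 2" unfolding lattice_vertex_def by simp
    then obtain x y where xy: "T - {c} = {x,y}" "x \<noteq> y" by (auto simp: card_2_iff)
    then have T: "T = {c,x,y}" using cT by auto
    have "nbr c x" "nbr c y" "nbr x y" using L xy cT unfolding lattice_vertex_def by auto
    then obtain i j where ij: "i < 6" "j < 6" "x = nb i c" "y = nb j c"
      using nbr_iff_nb by metis
    with \<open>nbr x y\<close> have "j = Suc i mod 6 \<or> i = Suc j mod 6" using nbr_nb_nb_iff by blast
    then have "T = corner i c \<or> T = corner j c"
      unfolding T corner_def ij by (auto simp: insert_commute)
    then show "T \<in> (\<lambda>k. corner k c) ` {..<6}" using ij by auto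
  qed
qed

lemma corner_eq_iff: "corner i c = corner j c \<longleftrightarrow> i mod 6 = j mod 6"
proof -
  have "\<forall>i<6. \<forall>j<6. nb i (a,b) \<in> corner j (a,b) \<longrightarrow> nb (Suc i) (a,b) \<in> corner j (a,b) \<longrightarrow> i = j" for a b
    unfolding all_less_6 by (simp add: corner_def nb_def nb_offsets_def)
  then have "nb i c \<in> corner j c \<Longrightarrow> nb (Suc i) c \<in> corner j c \<Longrightarrow> i mod 6 = j mod 6"
    by (metis corner_mod6 mod_less_divisor nb_Suc_mod6 nb_mod6 prod.collapse zero_less_numeral)
  then show ?thesis by (metis corner_def corner_mod6 insertCI)
qed

lemma corner_Int_corner_Suc: "corner k c \<inter> corner (Suc k) c = {c, nb (Suc k) c}"
proof -
  have "\<forall>k<6. nb k (a,b) \<notin> corner (Suc k) (a,b) \<and> nb (Suc (Suc k)) (a,b) \<notin> corner k (a,b)" for a b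
    unfolding all_less_6 by (simp add: corner_def nb_def nb_offsets_def)
  then have "nb k c \<notin> corner (Suc k) c" "nb (Suc (Suc k)) c \<notin> corner k c"
    by (metis corner_Suc_mod6 corner_mod6 mod_Suc_eq mod_less_divisor nb_mod6 prod.collapse zero_less_numeral)+
  then show ?thesis unfolding corner_def[of k] by (auto simp: corner_def)
qed

lemma corner_Int_corner_far:
  assumes "i < 6" "j < 6" "i \<noteq> j" "j \<noteq> Suc i mod 6" "i \<noteq> Suc j mod 6"
  shows "corner i c \<inter> corner j c = {c}"
proof -
  have "\<forall>i<6. \<forall>j<6. j \<noteq> Suc i mod 6 \<longrightarrow> i \<noteq> Suc j mod 6 \<longrightarrow> i \<noteq> j \<longrightarrow>
      nb i (a,b) \<notin> corner j (a,b) \<and> nb (Suc i) (a,b) \<notin> corner j (a,b)" for a b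
    unfolding all_less_6 by (simp add: corner_def nb_def nb_offsets_def)
  then have "nb i c \<notin> corner j c" "nb (Suc i) c \<notin> corner j c"
    using assms prod.collapse[of c] by metis+
  then show ?thesis unfolding corner_def[of i] by (auto simp: corner_def)
qed

lemma hex_edges_eq_sides: "hex_edges c = (\<lambda>k. side k c) ` {..<6}"
proof
  show "(\<lambda>k. side k c) ` {..<6} \<subseteq> hex_edges c"
  proof
    fix e assume "e \<in> (\<lambda>k. side k c) ` {..<6}"
    then obtain k where "e = side k c" by blast
    moreover have "card (corner k c \<inter> corner (Suc k) c) = 2"
      unfolding corner_Int_corner_Suc using nb_neq_self[of "Suc k" c] by auto
    ultimately show "e \<in> hex_edges c"
      unfolding hex_edges_def side_def using corner_in_hex_vertices by blast
  qed
next
  show "hex_edges c \<subseteq> (\<lambda>k. side k c) ` {..<6}"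
  proof
    fix e assume "e \<in> hex_edges c"
    then obtain u v where e: "e = {u,v}" "u \<in> hex_vertices c" "v \<in> hex_vertices c" "card (u \<inter> v) = 2"
      unfolding hex_edges_def by blast
    obtain i j where ij: "i < 6" "j < 6" "u = corner i c" "v = corner j c"
      using e(2,3) unfolding hex_vertices_eq_corners by blast
    have "i \<noteq> j" using e(4) card_corner[of i c] ij by auto
    moreover have "j = Suc i mod 6 \<or> i = Suc j mod 6"
    proof (rule ccontr)
      assume "\<not> (j = Suc i mod 6 \<or> i = Suc j mod 6)"
      then have "u \<inter> v = {c}" using corner_Int_corner_far[OF ij(1,2) \<open>i \<noteq> j\<close>] ij by blast
      then show False using e(4) by simp
    qed
    ultimately have "e = side i c \<or> e = side j c"
      unfolding e ij side_def by (auto simp: insert_commute)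
    then show "e \<in> (\<lambda>k. side k c) ` {..<6}" using ij by blast
  qed
qed

lemma side_in_hex_edges: "side k c \<in> hex_edges c"
  unfolding hex_edges_eq_sides by (rule image_eqI[of _ _ "k mod 6"]) simp_all

lemma side_eq_iff: "side i c = side j c \<longleftrightarrow> i mod 6 = j mod 6"
proof
  assume "side i c = side j c"
  then have "corner i c \<inter> corner (Suc i) c = corner j c \<inter> corner (Suc j) c"
    unfolding side_def by (auto simp: doubleton_eq_iff Int_commute)
  then have "nb (Suc i) c = nb (Suc j) c"
    unfolding corner_Int_corner_Suc using nb_neq_self[of "Suc i" c] nb_neq_self[of "Suc j" c]
    by (auto simp: doubleton_eq_iff)
  then show "i mod 6 = j mod 6"
    unfolding nb_eq_iff by (auto simp: mod_Suc split: if_splits)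
qed (metis side_mod6)

lemma finite_hex_edges: "finite (hex_edges c)"
  unfolding hex_edges_eq_sides by simp

lemma card_hex_edges: "card (hex_edges c) = 6"
proof -
  have "inj_on (\<lambda>k. side k c) {..<6}" unfolding inj_on_def side_eq_iff by simp
  then show ?thesis unfolding hex_edges_eq_sides by (simp add: card_image)
qed

lemma hex_edge_subset: "e \<in> hex_edges c \<Longrightarrow> e \<subseteq> hex_vertices c"
  unfolding hex_edges_def by blast

lemma hex_edge_nonempty: "e \<in> hex_edges c \<Longrightarrow> e \<noteq> {}"
  unfolding hex_edges_def by blast

lemma hex_vertex_on_two_sides:
  assumes "v \<in> hex_vertices c"
  obtains e1 e2 where "e1 \<noteq> e2" "e1 \<in> hex_edges c" "e2 \<in> hex_edges c" "v \<in> e1" "v \<in> e2"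
proof -
  obtain k where k: "v = corner k c" using assms unfolding hex_vertices_eq_corners by blast
  have "corner (Suc (k + 5)) c = corner k c" unfolding corner_eq_iff by simp
  then have "v \<in> side (k + 5) c" "v \<in> side k c" unfolding k side_def by auto
  moreover have "side k c \<noteq> side (k + 5) c" unfolding side_eq_iff by presburger
  ultimately show thesis using that side_in_hex_edges by metis
qed

lemma card_hex_edges_Int_le_1:
  assumes "c \<noteq> d"
  shows "card (hex_edges c \<inter> hex_edges d) \<le> 1"
proof -
  have shared: "nb (Suc k) c = d" if "e = side k c" "e \<in> hex_edges d" for e k
  proof -
    have "d \<in> corner k c" "d \<in> corner (Suc k) c"
      using hex_edge_subset[OF \<open>e \<in> hex_edges d\<close>] that(1) unfolding side_def hex_vertices_def by auto
    then show ?thesis using corner_Int_corner_Suc[of k c] assms by auto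
  qed
  have "x = y" if x: "x \<in> hex_edges c \<inter> hex_edges d" and y: "y \<in> hex_edges c \<inter> hex_edges d" for x y
  proof -
    obtain k l where kl: "x = side k c" "y = side l c"
      using x y unfolding hex_edges_eq_sides[of c] by blast
    with x y have "nb (Suc k) c = nb (Suc l) c" using shared by auto
    then show "x = y"
      unfolding kl side_eq_iff nb_eq_iff by (auto simp: mod_Suc split: if_splits)
  qed
  then show ?thesis using finite_hex_edges[of c] by (simp add: card_le_Suc0_iff_eq)
qed

lemma hex_edges_disjoint: "hex_vertices a \<inter> hex_vertices b = {} \<Longrightarrow> hex_edges a \<inter> hex_edges b = {}"
  using hex_edge_subset hex_edge_nonempty by blast

lemma corner_Suc_in_hex_edge_iff:
  assumes "e \<in> hex_edges c"
  shows "corner (Suc k) c \<in> e \<longleftrightarrow> e = side k c \<or> e = side (Suc k) c"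
proof -
  obtain j where e: "e = side j c" using assms unfolding hex_edges_eq_sides by blast
  have "corner (Suc k) c \<in> e \<longleftrightarrow> Suc k mod 6 = j mod 6 \<or> Suc k mod 6 = Suc j mod 6"
    unfolding e side_def by (simp add: corner_eq_iff)
  also have "\<dots> \<longleftrightarrow> j mod 6 = Suc k mod 6 \<or> j mod 6 = k mod 6"
    by (auto simp: mod_Suc split: if_splits)
  finally show ?thesis unfolding e side_eq_iff by blast
qed

section \<open>Perfect matchings and alternating hexagons\<close>

lemma alternating_ex_edge:
  "alternating M c \<Longrightarrow> v \<in> hex_vertices c \<Longrightarrow> \<exists>e\<in>M \<inter> hex_edges c. v \<in> e"
  unfolding alternating_def by blast

lemma alternating_side_Suc:
  assumes "alternating M c"
  shows "side (Suc k) c \<in> M \<longleftrightarrow> side k c \<notin> M"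
proof -
  have "\<exists>!e. e \<in> M \<inter> hex_edges c \<and> corner (Suc k) c \<in> e"
    using assms corner_in_hex_vertices unfolding alternating_def by blast
  then obtain e where e: "e \<in> M \<inter> hex_edges c" "corner (Suc k) c \<in> e"
    and uniq: "\<And>e'. e' \<in> M \<inter> hex_edges c \<Longrightarrow> corner (Suc k) c \<in> e' \<Longrightarrow> e' = e"
    by blast
  have "e = side k c \<or> e = side (Suc k) c" using e corner_Suc_in_hex_edge_iff by blast
  moreover have "side k c \<noteq> side (Suc k) c" unfolding side_eq_iff by (simp add: mod_Suc)
  moreover have "corner (Suc k) c \<in> side k c" "corner (Suc k) c \<in> side (Suc k) c"
    by (simp_all add: side_def)
  ultimately show ?thesis using uniq side_in_hex_edges e by blast
qed

lemma alternating_side_parity: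
  assumes "alternating M c"
  shows "side k c \<in> M \<longleftrightarrow> (side 0 c \<in> M \<longleftrightarrow> even k)"
  by (induction k) (simp_all add: alternating_side_Suc[OF assms])

text \<open>A hexagon has exactly two perfect matchings.\<close>
lemma alternating_Int_hex_edges_cases:
  assumes "alternating M c" "alternating N c"
  shows "M \<inter> hex_edges c = N \<inter> hex_edges c \<or> M \<inter> hex_edges c = hex_edges c - N"
proof (cases "side 0 c \<in> M \<longleftrightarrow> side 0 c \<in> N")
  case True
  then have "side k c \<in> M \<longleftrightarrow> side k c \<in> N" for k
    using alternating_side_parity[OF assms(1)] alternating_side_parity[OF assms(2)] by blast
  then show ?thesis unfolding hex_edges_eq_sides by blast
next
  case False
  then have "side k c \<in> M \<longleftrightarrow> side k c \<notin> N" for k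
    using alternating_side_parity[OF assms(1)] alternating_side_parity[OF assms(2)] by blast
  then show ?thesis unfolding hex_edges_eq_sides by blast
qed

lemma HE_edge_subset: "e \<in> HE S \<Longrightarrow> e \<subseteq> HV S"
  unfolding HE_def HV_def using hex_edge_subset by blast

lemma HE_edge_nonempty: "e \<in> HE S \<Longrightarrow> e \<noteq> {}"
  unfolding HE_def using hex_edge_nonempty by blast

lemma perfect_matching_edge_unique:
  "perfect_matching S M \<Longrightarrow> e \<in> M \<Longrightarrow> e' \<in> M \<Longrightarrow> v \<in> e \<Longrightarrow> v \<in> e' \<Longrightarrow> e = e'"
  unfolding perfect_matching_def using HE_edge_subset by blast

lemma perfect_matching_ex_edge:
  "perfect_matching S M \<Longrightarrow> v \<in> HV S \<Longrightarrow> \<exists>e\<in>M. v \<in> e"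
  unfolding perfect_matching_def by blast

text \<open>If the M-edge at a vertex of c left c, both edges of c at that vertex would lie in M'.\<close>
lemma alternating_if_sym_diff_eq_hex_edges:
  assumes M: "perfect_matching S M" and M': "perfect_matching S M'"
    and d: "sym_diff M M' = hex_edges c" and "c \<in> S"
  shows "alternating M c"
  unfolding alternating_def
proof
  fix v assume v: "v \<in> hex_vertices c"
  then have "v \<in> HV S" using \<open>c \<in> S\<close> unfolding HV_def by blast
  then obtain e where e: "e \<in> M" "v \<in> e" using perfect_matching_ex_edge[OF M] by blast
  have "e \<in> hex_edges c"
  proof (rule ccontr)
    assume "e \<notin> hex_edges c"
    obtain e1 e2 where "e1 \<noteq> e2" "e1 \<in> hex_edges c" "e2 \<in> hex_edges c" "v \<in> e1" "v \<in> e2"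
      using hex_vertex_on_two_sides[OF v] .
    moreover from this have "e1 \<notin> M" "e2 \<notin> M"
      using perfect_matching_edge_unique[OF M e(1) _ e(2)] \<open>e \<notin> hex_edges c\<close> by blast+
    ultimately show False
      using perfect_matching_edge_unique[OF M'] d by blast
  qed
  with e show "\<exists>!e. e \<in> M \<inter> hex_edges c \<and> v \<in> e"
    using perfect_matching_edge_unique[OF M] by blast
qed

text \<open>Distinct hexagons share at most one edge, but a common vertex would give two:
  its M-edge and its M'-edge.\<close>
lemma hex_vertices_disjoint_if_alternating:
  assumes M: "perfect_matching S M" and M': "perfect_matching S M'"
    and d: "sym_diff M M' = hex_edges a" and "a \<in> S"
    and b: "alternating M b" "alternating M' b" and "a \<noteq> b"
  shows "hex_vertices a \<inter> hex_vertices b = {}"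
proof (rule ccontr)
  assume "hex_vertices a \<inter> hex_vertices b \<noteq> {}"
  then obtain v where va: "v \<in> hex_vertices a" and vb: "v \<in> hex_vertices b" by blast
  have "sym_diff M' M = hex_edges a" using d by blast
  then have a: "alternating M a" "alternating M' a"
    using alternating_if_sym_diff_eq_hex_edges M M' d \<open>a \<in> S\<close> by blast+
  obtain e where e: "e \<in> M \<inter> hex_edges a" "v \<in> e" using alternating_ex_edge[OF a(1) va] by blast
  obtain f where f: "f \<in> M \<inter> hex_edges b" "v \<in> f" using alternating_ex_edge[OF b(1) vb] by blast
  obtain e' where e': "e' \<in> M' \<inter> hex_edges a" "v \<in> e'" using alternating_ex_edge[OF a(2) va] by blast
  obtain f' where f': "f' \<in> M' \<inter> hex_edges b" "v \<in> f'" using alternating_ex_edge[OF b(2) vb] by blast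
  have "e = f" "e' = f'"
    using perfect_matching_edge_unique[OF M] perfect_matching_edge_unique[OF M'] e f e' f' by blast+
  moreover have "e \<noteq> e'" using d e e' by blast
  ultimately have "card {e, e'} \<le> card (hex_edges a \<inter> hex_edges b)"
    using e f e' f' by (intro card_mono) (auto simp: finite_hex_edges)
  then show False using card_hex_edges_Int_le_1[OF \<open>a \<noteq> b\<close>] \<open>e \<noteq> e'\<close> by simp
qed

section \<open>Four-cycles of the resonance graph\<close>

text \<open>The symmetric difference of the edge sets of two distinct hexagons determines them:
  they contribute at least five of its edges each, any other hexagon at most two.\<close>
lemma three_le_card_hex_edges_Int_sym_diff_iff:
  assumes "x \<noteq> y"
  shows "3 \<le> card (hex_edges z \<inter> sym_diff (hex_edges x) (hex_edges y)) \<longleftrightarrow> z = x \<or> z = y"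
proof
  assume "3 \<le> card (hex_edges z \<inter> sym_diff (hex_edges x) (hex_edges y))"
  show "z = x \<or> z = y"
  proof (rule ccontr)
    assume "\<not> (z = x \<or> z = y)"
    have "card (hex_edges z \<inter> sym_diff (hex_edges x) (hex_edges y))
        \<le> card ((hex_edges z \<inter> hex_edges x) \<union> (hex_edges z \<inter> hex_edges y))"
      by (rule card_mono) (auto simp: finite_hex_edges)
    also have "\<dots> \<le> card (hex_edges z \<inter> hex_edges x) + card (hex_edges z \<inter> hex_edges y)"
      by (rule card_Un_le)
    also have "\<dots> \<le> 2"
      using card_hex_edges_Int_le_1[of z x] card_hex_edges_Int_le_1[of z y] \<open>\<not> (z = x \<or> z = y)\<close>
      by simp
    finally show False using \<open>3 \<le> _\<close> by simp
  qed
next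
  have own: "3 \<le> card (hex_edges x \<inter> sym_diff (hex_edges x) (hex_edges y))" if "x \<noteq> y" for x y
  proof -
    have "hex_edges x \<inter> sym_diff (hex_edges x) (hex_edges y) = hex_edges x - hex_edges x \<inter> hex_edges y"
      by blast
    then show ?thesis
      using card_hex_edges_Int_le_1[OF that] card_hex_edges[of x]
      by (simp add: card_Diff_subset finite_hex_edges)
  qed
  moreover have "sym_diff (hex_edges y) (hex_edges x) = sym_diff (hex_edges x) (hex_edges y)"
    by blast
  ultimately show "z = x \<or> z = y \<Longrightarrow> 3 \<le> card (hex_edges z \<inter> sym_diff (hex_edges x) (hex_edges y))"
    using assms by metis
qed

lemma hex_edges_sym_diff_eq_cases:
  assumes "a \<noteq> b" "a' \<noteq> b'"
    and "sym_diff (hex_edges a) (hex_edges b) = sym_diff (hex_edges a') (hex_edges b')"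
  shows "a = a' \<and> b = b' \<or> a = b' \<and> b = a'"
  using three_le_card_hex_edges_Int_sym_diff_iff[OF assms(1)]
    three_le_card_hex_edges_Int_sym_diff_iff[OF assms(2)] assms
  by metis

lemma resonance_square_labels:
  assumes "sym_diff M1 M2 = hex_edges a" "sym_diff M2 M3 = hex_edges b"
    and "sym_diff M3 M4 = hex_edges a'" "sym_diff M4 M1 = hex_edges b'"
    and "M1 \<noteq> M3" "M2 \<noteq> M4"
  shows "a' = a \<and> b' = b \<and> a \<noteq> b"
proof -
  have diag: "sym_diff M1 M3 = sym_diff (hex_edges a) (hex_edges b)"
    using assms(1,2) by blast
  have diag': "sym_diff M1 M3 = sym_diff (hex_edges a') (hex_edges b')"
    using assms(3,4) by blast
  have "a \<noteq> b" "a' \<noteq> b'" using diag diag' \<open>M1 \<noteq> M3\<close> by auto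
  moreover have "a \<noteq> b'"
  proof
    assume "a = b'"
    then have "sym_diff M1 M2 = sym_diff M1 M4" using assms(1,4) by blast
    then show False using \<open>M2 \<noteq> M4\<close> by blast
  qed
  ultimately show ?thesis using hex_edges_sym_diff_eq_cases diag diag' by metis
qed

section \<open>Clar covers\<close>

lemma clar_cover_of_alternating_hexagons:
  assumes M: "perfect_matching S M" and "K \<subseteq> S"
    and alt: "\<forall>c\<in>K. alternating M c"
    and disj: "\<forall>c\<in>K. \<forall>d\<in>K. c \<noteq> d \<longrightarrow> hex_vertices c \<inter> hex_vertices d = {}"
  shows "clar_cover S K (M - (\<Union>c\<in>K. hex_edges c))"
  unfolding clar_cover_def
proof (intro conjI)
  let ?F = "M - (\<Union>c\<in>K. hex_edges c)"
  have MHE: "M \<subseteq> HE S" using M unfolding perfect_matching_def by blast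
  show "K \<subseteq> S" "?F \<subseteq> HE S" using \<open>K \<subseteq> S\<close> MHE by blast+
  show "\<forall>c\<in>K. \<forall>d\<in>K. c \<noteq> d \<longrightarrow> hex_vertices c \<inter> hex_vertices d = {}" by (fact disj)
  show "\<forall>e\<in>?F. \<forall>e'\<in>?F. e \<noteq> e' \<longrightarrow> e \<inter> e' = {}"
    using perfect_matching_edge_unique[OF M] by blast
  show "\<forall>e\<in>?F. \<forall>c\<in>K. e \<inter> hex_vertices c = {}"
  proof (intro ballI)
    fix e c assume e: "e \<in> ?F" and "c \<in> K"
    show "e \<inter> hex_vertices c = {}"
    proof (rule ccontr)
      assume "e \<inter> hex_vertices c \<noteq> {}"
      then obtain v where "v \<in> e" "v \<in> hex_vertices c" by blast
      then obtain e' where "e' \<in> M \<inter> hex_edges c" "v \<in> e'"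
        using alternating_ex_edge alt \<open>c \<in> K\<close> by blast
      then show False
        using perfect_matching_edge_unique[OF M] e \<open>v \<in> e\<close> \<open>c \<in> K\<close> by blast
    qed
  qed
  have "(\<Union>c\<in>K. hex_vertices c) \<subseteq> HV S" using \<open>K \<subseteq> S\<close> unfolding HV_def by blast
  moreover have "\<Union>?F \<subseteq> HV S" using MHE HE_edge_subset by blast
  moreover have "HV S \<subseteq> (\<Union>c\<in>K. hex_vertices c) \<union> \<Union>?F"
  proof
    fix v assume "v \<in> HV S"
    then obtain e where e: "e \<in> M" "v \<in> e" using perfect_matching_ex_edge[OF M] by blast
    show "v \<in> (\<Union>c\<in>K. hex_vertices c) \<union> \<Union>?F"
    proof (cases "\<exists>c\<in>K. e \<in> hex_edges c")
      case True
      then show ?thesis using hex_edge_subset e(2) by blast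
    next
      case False
      then show ?thesis using e by blast
    qed
  qed
  ultimately show "HV S = (\<Union>c\<in>K. hex_vertices c) \<union> \<Union>?F" by blast
qed

text \<open>Every vertex is covered by a hexagon or an edge of the Clar cover, and there the
  matching is already fixed; so a member of f(C) is determined by its edges on the hexagons.\<close>
lemma clar_set_subset_if_agree:
  assumes C: "clar_cover S K F" and M: "M \<in> clar_set S K F" and "F \<subseteq> M'"
    and agree: "\<forall>c\<in>K. M \<inter> hex_edges c = M' \<inter> hex_edges c"
  shows "M \<subseteq> M'"
proof
  fix e assume "e \<in> M"
  have pm: "perfect_matching S M" and alt: "\<forall>c\<in>K. alternating M c" and "F \<subseteq> M"
    using M unfolding clar_set_def by blast+
  have "e \<in> HE S" using pm \<open>e \<in> M\<close> unfolding perfect_matching_def by blast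
  then obtain v where "v \<in> e" "v \<in> HV S"
    using HE_edge_subset HE_edge_nonempty by blast
  moreover have "HV S = (\<Union>c\<in>K. hex_vertices c) \<union> \<Union>F"
    using C unfolding clar_cover_def by (elim conjE)
  ultimately consider c where "c \<in> K" "v \<in> hex_vertices c" | f where "f \<in> F" "v \<in> f"
    by blast
  then show "e \<in> M'"
  proof cases
    case (1 c)
    then obtain e' where "e' \<in> M \<inter> hex_edges c" "v \<in> e'"
      using alternating_ex_edge alt by blast
    then show ?thesis
      using perfect_matching_edge_unique[OF pm \<open>e \<in> M\<close>] \<open>v \<in> e\<close> agree \<open>c \<in> K\<close> by blast
  next
    case (2 f)
    then show ?thesis
      using perfect_matching_edge_unique[OF pm \<open>e \<in> M\<close>] \<open>v \<in> e\<close> \<open>F \<subseteq> M\<close> \<open>F \<subseteq> M'\<close> by blast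
  qed
qed

lemma clar_set_eq_if_agree:
  assumes "clar_cover S K F" "M \<in> clar_set S K F" "M' \<in> clar_set S K F"
    and "\<forall>c\<in>K. M \<inter> hex_edges c = M' \<inter> hex_edges c"
  shows "M = M'"
proof (rule subset_antisym)
  have "F \<subseteq> M" "F \<subseteq> M'" using assms(2,3) unfolding clar_set_def by blast+
  then show "M \<subseteq> M'" "M' \<subseteq> M"
    using clar_set_subset_if_agree[of S K F] assms by metis+
qed

section \<open>Hypercubes in the resonance graph\<close>

lemma cube_adj_insert: "i \<notin> A \<Longrightarrow> cube_adj A (insert i A)"
proof -
  assume "i \<notin> A"
  then have "(A - insert i A) \<union> (insert i A - A) = {i}" by blast
  then show ?thesis unfolding cube_adj_def by simp
qed

lemma cube_adj_sym: "cube_adj A B \<Longrightarrow> cube_adj B A"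
  unfolding cube_adj_def by (simp add: Un_commute)

text \<open>Adjacency is only required in one direction: the image of such a cube in R(H) turns
  out to be induced anyway.\<close>
locale resonance_cube =
  fixes S :: "cell set" and n :: nat and \<phi> :: "nat set \<Rightarrow> hedge set"
  assumes inj: "inj_on \<phi> (Pow {..<n})"
    and perfect: "A \<subseteq> {..<n} \<Longrightarrow> perfect_matching S (\<phi> A)"
    and adjacent: "A \<subseteq> {..<n} \<Longrightarrow> B \<subseteq> {..<n} \<Longrightarrow> cube_adj A B \<Longrightarrow> res_adj S (\<phi> A) (\<phi> B)"
begin

lemma cube_edge_flips_hexagon:
  assumes "A \<subseteq> {..<n}" "B \<subseteq> {..<n}" "cube_adj A B"
  obtains c where "c \<in> S" "sym_diff (\<phi> A) (\<phi> B) = hex_edges c"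
  using adjacent[OF assms] that unfolding res_adj_def by blast

definition label :: "nat \<Rightarrow> cell" where
  "label i = (SOME c. c \<in> S \<and> sym_diff (\<phi> {}) (\<phi> {i}) = hex_edges c)"

lemma label_spec:
  assumes "i < n"
  shows "label i \<in> S" "sym_diff (\<phi> {}) (\<phi> {i}) = hex_edges (label i)"
proof -
  obtain c where "c \<in> S" "sym_diff (\<phi> {}) (\<phi> {i}) = hex_edges c"
    using cube_edge_flips_hexagon[of "{}" "{i}"] cube_adj_insert[of i "{}"] assms by auto
  then have "\<exists>c. c \<in> S \<and> sym_diff (\<phi> {}) (\<phi> {i}) = hex_edges c" by blast
  then have "label i \<in> S \<and> sym_diff (\<phi> {}) (\<phi> {i}) = hex_edges (label i)"
    unfolding label_def by (rule someI_ex)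
  then show "label i \<in> S" "sym_diff (\<phi> {}) (\<phi> {i}) = hex_edges (label i)" by blast+
qed

text \<open>Flipping coordinate i always flips the same hexagon: the label is carried across
  each square of the cube to the opposite edge.\<close>
lemma sym_diff_insert_square:
  assumes "i < n" "j < n" "A \<subseteq> {..<n}" "i \<notin> A" "j \<notin> A" "i \<noteq> j"
    and flip: "sym_diff (\<phi> A) (\<phi> (insert i A)) = hex_edges c"
  shows "sym_diff (\<phi> (insert j A)) (\<phi> (insert i (insert j A))) = hex_edges c"
proof -
  let ?A2 = "insert i A" and ?A3 = "insert j (insert i A)" and ?A4 = "insert j A"
  have sub: "?A2 \<subseteq> {..<n}" "?A3 \<subseteq> {..<n}" "?A4 \<subseteq> {..<n}" using assms by auto
  have "cube_adj ?A2 ?A3" using assms by (intro cube_adj_insert) auto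
  then obtain b where b: "sym_diff (\<phi> ?A2) (\<phi> ?A3) = hex_edges b"
    using cube_edge_flips_hexagon sub by metis
  have "cube_adj ?A3 ?A4"
    using cube_adj_insert[of i ?A4] assms by (auto simp: insert_commute intro: cube_adj_sym)
  then obtain a' where a': "sym_diff (\<phi> ?A3) (\<phi> ?A4) = hex_edges a'"
    using cube_edge_flips_hexagon sub by metis
  have "cube_adj ?A4 A" using cube_adj_insert[of j A] assms by (auto intro: cube_adj_sym)
  then obtain b' where b': "sym_diff (\<phi> ?A4) (\<phi> A) = hex_edges b'"
    using cube_edge_flips_hexagon sub assms by metis
  have "\<phi> A \<noteq> \<phi> ?A3" "\<phi> ?A2 \<noteq> \<phi> ?A4"
    using inj sub assms unfolding inj_on_def by (auto simp: insert_eq_iff)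
  then have "a' = c" using resonance_square_labels[OF flip b a' b'] by blast
  moreover have "?A3 = insert i ?A4" by auto
  ultimately show ?thesis using a' by (metis Un_commute)
qed

lemma sym_diff_insert:
  assumes "A \<subseteq> {..<n}" "i < n" "i \<notin> A"
  shows "sym_diff (\<phi> A) (\<phi> (insert i A)) = hex_edges (label i)"
proof -
  have "finite A" using assms(1) finite_subset by blast
  then show ?thesis using assms
  proof (induction A rule: finite_induct)
    case empty
    then show ?case using label_spec by simp
  next
    case (insert j A)
    then show ?case
      using sym_diff_insert_square[of i j A "label i"] by auto
  qed
qed

lemma alternating_label:
  assumes "A \<subseteq> {..<n}" "i < n"
  shows "alternating (\<phi> A) (label i)"
proof (cases "i \<in> A")
  case False
  then show ?thesis
    using alternating_if_sym_diff_eq_hex_edges[OF perfect perfect sym_diff_insert label_spec(1)] assms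
    by auto
next
  case True
  then have "insert i (A - {i}) = A" by auto
  moreover have "sym_diff (\<phi> (A - {i})) (\<phi> (insert i (A - {i}))) = hex_edges (label i)"
    using assms by (intro sym_diff_insert) auto
  ultimately have "sym_diff (\<phi> A) (\<phi> (A - {i})) = hex_edges (label i)"
    by (simp add: Un_commute)
  moreover have "A - {i} \<subseteq> {..<n}" using assms by auto
  ultimately show ?thesis
    using alternating_if_sym_diff_eq_hex_edges[OF perfect perfect _ label_spec(1)] assms by blast
qed

lemma labels_disjoint:
  assumes "i < n" "j < n" "i \<noteq> j"
  shows "label i \<noteq> label j" "hex_vertices (label i) \<inter> hex_vertices (label j) = {}"
proof -
  have s1: "sym_diff (\<phi> {}) (\<phi> {i}) = hex_edges (label i)"
    using sym_diff_insert[of "{}" i] assms by simp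
  have s2: "sym_diff (\<phi> {i}) (\<phi> {j, i}) = hex_edges (label j)"
    using sym_diff_insert[of "{i}" j] assms by simp
  have s3: "sym_diff (\<phi> {j, i}) (\<phi> {j}) = hex_edges (label i)"
    using sym_diff_insert[of "{j}" i] assms by (simp add: insert_commute Un_commute)
  have s4: "sym_diff (\<phi> {j}) (\<phi> {}) = hex_edges (label j)"
    using sym_diff_insert[of "{}" j] assms by (simp add: Un_commute)
  have "\<phi> {} \<noteq> \<phi> {j, i}" "\<phi> {i} \<noteq> \<phi> {j}"
    using inj assms unfolding inj_on_def by auto
  then show "label i \<noteq> label j" using resonance_square_labels[OF s1 s2 s3 s4] by blast
  then show "hex_vertices (label i) \<inter> hex_vertices (label j) = {}"
    using hex_vertices_disjoint_if_alternating[OF perfect perfect s1 label_spec(1)]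
      alternating_label assms by auto
qed

definition hexagons :: "cell set" where
  "hexagons = label ` {..<n}"

lemma phi_eq_sym_diff:
  assumes "A \<subseteq> {..<n}"
  shows "\<phi> A = sym_diff (\<phi> {}) (\<Union>i\<in>A. hex_edges (label i))"
proof -
  have "finite A" using assms finite_subset by blast
  then show ?thesis using assms
  proof (induction A rule: finite_induct)
    case empty
    then show ?case by simp
  next
    case (insert j A)
    have "(\<Union>i\<in>A. hex_edges (label i)) \<inter> hex_edges (label j) = {}"
      using hex_edges_disjoint labels_disjoint(2) insert by blast
    moreover have "\<phi> (insert j A) = sym_diff (\<phi> A) (hex_edges (label j))"
      using sym_diff_insert[of A j] insert by blast
    ultimately show ?case using insert by auto
  qed
qed

definition single_edges :: "hedge set" where
  "single_edges = \<phi> {} - (\<Union>c\<in>hexagons. hex_edges c)"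

lemma clar_cover_hexagons: "clar_cover S hexagons single_edges"
  unfolding single_edges_def
proof (rule clar_cover_of_alternating_hexagons[OF perfect])
  show "hexagons \<subseteq> S" "\<forall>c\<in>hexagons. alternating (\<phi> {}) c"
    unfolding hexagons_def using label_spec(1) alternating_label by auto
  show "\<forall>c\<in>hexagons. \<forall>d\<in>hexagons. c \<noteq> d \<longrightarrow> hex_vertices c \<inter> hex_vertices d = {}"
    unfolding hexagons_def using labels_disjoint(2) by blast
qed simp

lemma card_hexagons: "card hexagons = n"
proof -
  have "inj_on label {..<n}" using labels_disjoint(1) by (meson inj_onI lessThan_iff)
  then show ?thesis unfolding hexagons_def by (simp add: card_image)
qed

lemma phi_Int_hex_edges_label:
  assumes "A \<subseteq> {..<n}" "i < n"
  shows "\<phi> A \<inter> hex_edges (label i) =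
    (if i \<in> A then hex_edges (label i) - \<phi> {} else \<phi> {} \<inter> hex_edges (label i))"
proof -
  have "hex_edges (label j) \<inter> hex_edges (label i) = {}" if "j \<in> A" "j \<noteq> i" for j
    using hex_edges_disjoint[OF labels_disjoint(2)[of j i]] that assms by blast
  then have "(\<Union>j\<in>A. hex_edges (label j)) \<inter> hex_edges (label i) = (if i \<in> A then hex_edges (label i) else {})"
    by auto
  then show ?thesis using phi_eq_sym_diff[OF assms(1)] by auto
qed

lemma phi_in_clar_set:
  assumes "A \<subseteq> {..<n}"
  shows "\<phi> A \<in> clar_set S hexagons single_edges"
proof -
  have "(\<Union>i\<in>A. hex_edges (label i)) \<subseteq> (\<Union>c\<in>hexagons. hex_edges c)"
    using assms unfolding hexagons_def by blast
  then have "single_edges \<subseteq> \<phi> A"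
    unfolding single_edges_def phi_eq_sym_diff[OF assms] by blast
  then show ?thesis
    unfolding clar_set_def hexagons_def using perfect alternating_label assms by auto
qed

lemma clar_set_hexagons: "clar_set S hexagons single_edges = \<phi> ` Pow {..<n}"
proof
  show "\<phi> ` Pow {..<n} \<subseteq> clar_set S hexagons single_edges"
    using phi_in_clar_set by blast
next
  show "clar_set S hexagons single_edges \<subseteq> \<phi> ` Pow {..<n}"
  proof
    fix M assume M: "M \<in> clar_set S hexagons single_edges"
    define A where "A = {i. i < n \<and> M \<inter> hex_edges (label i) \<noteq> \<phi> {} \<inter> hex_edges (label i)}"
    have A: "A \<subseteq> {..<n}" unfolding A_def by blast
    have "M \<inter> hex_edges (label i) = \<phi> A \<inter> hex_edges (label i)" if "i < n" for i
    proof -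
      have "alternating M (label i)" "alternating (\<phi> {}) (label i)"
        using M alternating_label that unfolding clar_set_def hexagons_def by auto
      then have cases: "M \<inter> hex_edges (label i) = \<phi> {} \<inter> hex_edges (label i) \<or>
          M \<inter> hex_edges (label i) = hex_edges (label i) - \<phi> {}"
        by (rule alternating_Int_hex_edges_cases)
      show ?thesis
      proof (cases "i \<in> A")
        case True
        then show ?thesis
          using cases phi_Int_hex_edges_label[OF A that] unfolding A_def by auto
      next
        case False
        then show ?thesis
          using that phi_Int_hex_edges_label[OF A that] unfolding A_def by auto
      qed
    qed
    then have "M = \<phi> A"
      using clar_set_eq_if_agree[OF clar_cover_hexagons M phi_in_clar_set[OF A]]
      unfolding hexagons_def by blast
    then show "M \<in> \<phi> ` Pow {..<n}" using A by blast
  qed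
qed

end

theorem lemma6:
  fixes S :: "cell set" and W :: "hedge set set" and n :: nat
  assumes "hexagonal_system S"
    and "kekulean S"
    and "W \<subseteq> {M. perfect_matching S M}"
    and "induced_iso_cube S W n"
  shows "\<exists>K F. clar_cover S K F \<and> card K = n \<and> clar_set S K F = W"
proof -
  obtain \<phi> where bij: "bij_betw \<phi> (Pow {..<n}) W"
    and adj: "\<forall>A\<in>Pow {..<n}. \<forall>B\<in>Pow {..<n}. cube_adj A B \<longleftrightarrow> res_adj S (\<phi> A) (\<phi> B)"
    using assms(4) unfolding induced_iso_cube_def by blast
  interpret resonance_cube S n \<phi>
    using bij adj assms(3) by unfold_locales (auto simp: bij_betw_def)
  show ?thesis
    using clar_cover_hexagons card_hexagons clar_set_hexagons bij by (auto simp: bij_betw_def)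
qed

end
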